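(* Every stag hunt is weakly acyclic; that is, every weakly maximal state of a stag hunt is a pure Nash equilibrium. Equivalently, from every profile of a stag hunt there is a finite sequence of strictly profitable unilateral deviations ending at a pure Nash equilibrium.
   Context: A stag hunt is a game with players $I=\{1,\dots,n\}$, each with strategy set $S_i=\{A,D\}$, given by a constant $c\in\mathbb{R}$ and, for each $i$, a function $f_i$ defined on subsets $T\subseteq I$ with $i\in T$ that is strictly increasing with respect to inclusion ($T\subsetneq T'$ implies $f_i(T)<f_i(T')$). For a profile $s$ let $T(s)=\{j: s_j=A\}$; the payoffs are $u_i(s)=f_i(T(s))$ if $s_i=A$ and $u_i(s)=c$ if $s_i=D$. Moreover $f_i(I)>c$ for all $i$ (so everyone prefers the all-$A$ profile $A^n$) and $f_i(\{i\})<c$ for all $i$ (unilateral deviations from the all-$D$ profile $D^n$ are harmful). For a profile $s$ and $s_i'$, $(s_i',s_{-i})$ denotes $s$ with player $i$'s strategy replaced. A pure Nash equilibrium is $s$ with $u_i(s)\ge u_i(s_i',s_{-i})$ for all $i,s_i'$. The strict deployment graph has vertex set the profiles and an arc $(s,s')$ iff $s'=(s_i',s_{-i})$ for some $i$ with $u_i(s')>u_i(s)$. Define $s\succeq s'$ iff there is a directed path (possibly of length $0$) in this graph from $s'$ to $s$, and $s\succ s'$ iff $s\succeq s'$ and not $s'\succeq s$. A weakly maximal state is an $s^*$ with no $s$ satisfying $s\succ s^*$. A game is weakly acyclic if all its weakly maximal states are pure Nash equilibria. *)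

theory Defs
  imports Complex_Main
begin

datatype strat = A | D

definition nash :: "('i \<Rightarrow> ('i \<Rightarrow> 's) \<Rightarrow> real) \<Rightarrow> ('i \<Rightarrow> 's) \<Rightarrow> bool" where
  "nash u s \<longleftrightarrow> (\<forall>i x. u i s \<ge> u i (s(i := x)))"

definition sdg_arc :: "('i \<Rightarrow> ('i \<Rightarrow> 's) \<Rightarrow> real) \<Rightarrow> ('i \<Rightarrow> 's) \<Rightarrow> ('i \<Rightarrow> 's) \<Rightarrow> bool" where
  "sdg_arc u s s' \<longleftrightarrow> (\<exists>i x. s' = s(i := x) \<and> u i s' > u i s)"

definition sdg_ge :: "('i \<Rightarrow> ('i \<Rightarrow> 's) \<Rightarrow> real) \<Rightarrow> ('i \<Rightarrow> 's) \<Rightarrow> ('i \<Rightarrow> 's) \<Rightarrow> bool" where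
  "sdg_ge u s s' \<longleftrightarrow> (sdg_arc u)\<^sup>*\<^sup>* s' s"

definition sdg_gt :: "('i \<Rightarrow> ('i \<Rightarrow> 's) \<Rightarrow> real) \<Rightarrow> ('i \<Rightarrow> 's) \<Rightarrow> ('i \<Rightarrow> 's) \<Rightarrow> bool" where
  "sdg_gt u s s' \<longleftrightarrow> sdg_ge u s s' \<and> \<not> sdg_ge u s' s"

definition weakly_maximal :: "('i \<Rightarrow> ('i \<Rightarrow> 's) \<Rightarrow> real) \<Rightarrow> ('i \<Rightarrow> 's) \<Rightarrow> bool" where
  "weakly_maximal u s0 \<longleftrightarrow> \<not> (\<exists>s. sdg_gt u s s0)"

definition weakly_acyclic :: "('i \<Rightarrow> ('i \<Rightarrow> 's) \<Rightarrow> real) \<Rightarrow> bool" where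
  "weakly_acyclic u \<longleftrightarrow> (\<forall>s. weakly_maximal u s \<longrightarrow> nash u s)"

definition Tset :: "('i \<Rightarrow> strat) \<Rightarrow> 'i set" where
  "Tset s = {j. s j = A}"

definition stag_payoff :: "('i \<Rightarrow> 'i set \<Rightarrow> real) \<Rightarrow> real \<Rightarrow> 'i \<Rightarrow> ('i \<Rightarrow> strat) \<Rightarrow> real" where
  "stag_payoff f c i s = (if s i = A then f i (Tset s) else c)"

definition stag_hunt :: "('i \<Rightarrow> 'i set \<Rightarrow> real) \<Rightarrow> real \<Rightarrow> bool" where
  "stag_hunt f c \<longleftrightarrow>
     (\<forall>i T T'. i \<in> T \<longrightarrow> T \<subset> T' \<longrightarrow> f i T < f i T') \<and>
     (\<forall>i. f i UNIV > c) \<and>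
     (\<forall>i. f i {i} < c)"

end

theory Submission
  imports Defs
begin

text \<open>Starting anywhere, let defectors who would profit from joining switch to A one at a time;
  this ends in a profile where no defector wants to join. Then let hunters who lose money
  switch to D one at a time. Since payoffs are monotone in the set of hunters, a departure never
  makes joining attractive again, so this second phase ends in a Nash equilibrium. Finally, a
  Nash equilibrium has no outgoing arcs, so a profile from which one is reachable but which is
  not itself an equilibrium is strictly dominated, hence not weakly maximal.\<close>

lemma nash_iff_no_sdg_arc: "nash u s \<longleftrightarrow> (\<forall>s'. \<not> sdg_arc u s s')"
  unfolding nash_def sdg_arc_def by (metis not_le)

lemma nash_reaches_only_itself:
  assumes "nash u e" and "(sdg_arc u)\<^sup>*\<^sup>* e s"
  shows "s = e"
  using assms by (metis converse_rtranclpE nash_iff_no_sdg_arc)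

lemma weakly_acyclic_if_reaches_nash:
  assumes "\<And>s. \<exists>e. (sdg_arc u)\<^sup>*\<^sup>* s e \<and> nash u e"
  shows "weakly_acyclic u"
  unfolding weakly_acyclic_def
proof (intro allI impI)
  fix s assume max: "weakly_maximal u s"
  obtain e where reach: "(sdg_arc u)\<^sup>*\<^sup>* s e" and e: "nash u e"
    using assms by blast
  show "nash u s"
  proof (rule ccontr)
    assume "\<not> nash u s"
    then have "\<not> (sdg_arc u)\<^sup>*\<^sup>* e s"
      using nash_reaches_only_itself[OF e] e by blast
    then have "sdg_gt u e s"
      using reach unfolding sdg_gt_def sdg_ge_def by blast
    then show False
      using max unfolding weakly_maximal_def by blast
  qed
qed

lemma Tset_upd_A: "Tset (s(i := A)) = insert i (Tset s)"
  by (auto simp: Tset_def)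

lemma Tset_upd_D: "Tset (s(i := D)) = Tset s - {i}"
  by (auto simp: Tset_def)

lemma sdg_arc_join:
  assumes "s i = D" and "c < f i (insert i (Tset s))"
  shows "sdg_arc (stag_payoff f c) s (s(i := A))"
  unfolding sdg_arc_def
  using assms by (intro exI[of _ i] exI[of _ A]) (auto simp: stag_payoff_def Tset_upd_A)

lemma sdg_arc_leave:
  assumes "s i = A" and "f i (Tset s) < c"
  shows "sdg_arc (stag_payoff f c) s (s(i := D))"
  unfolding sdg_arc_def
  using assms by (intro exI[of _ i] exI[of _ D]) (auto simp: stag_payoff_def)

definition join_stable :: "('i \<Rightarrow> 'i set \<Rightarrow> real) \<Rightarrow> real \<Rightarrow> ('i \<Rightarrow> strat) \<Rightarrow> bool" where
  "join_stable f c s \<longleftrightarrow> (\<forall>i. s i = D \<longrightarrow> f i (insert i (Tset s)) \<le> c)"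

lemma reaches_join_stable:
  fixes s :: "'i::finite \<Rightarrow> strat"
  shows "\<exists>s'. (sdg_arc (stag_payoff f c))\<^sup>*\<^sup>* s s' \<and> join_stable f c s'"
proof (induction "card (- Tset s)" arbitrary: s rule: less_induct)
  case less
  show ?case
  proof (cases "join_stable f c s")
    case True
    then show ?thesis by blast
  next
    case False
    then obtain i where i: "s i = D" "c < f i (insert i (Tset s))"
      unfolding join_stable_def by (auto simp: not_le)
    have "i \<notin> Tset s"
      using i by (simp add: Tset_def)
    then have "- Tset (s(i := A)) \<subset> - Tset s"
      by (auto simp: Tset_upd_A)
    then have "card (- Tset (s(i := A))) < card (- Tset s)"
      by (simp add: psubset_card_mono)
    then show ?thesis
      using less sdg_arc_join[of s i c f, OF i] by (meson converse_rtranclp_into_rtranclp)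
  qed
qed

lemma join_stable_leave:
  assumes mono: "\<And>j T T'. j \<in> T \<Longrightarrow> T \<subseteq> T' \<Longrightarrow> f j T \<le> f j T'"
    and stable: "join_stable f c s" and i: "s i = A" "f i (Tset s) < c"
  shows "join_stable f c (s(i := D))"
  unfolding join_stable_def
proof (intro allI impI)
  fix j assume j: "(s(i := D)) j = D"
  show "f j (insert j (Tset (s(i := D)))) \<le> c"
  proof (cases "j = i")
    case True
    then have "insert j (Tset (s(i := D))) = Tset s"
      using i by (auto simp: Tset_def)
    then show ?thesis using i True by simp
  next
    case False
    then have "s j = D" using j by simp
    have "f j (insert j (Tset (s(i := D)))) \<le> f j (insert j (Tset s))"
      by (rule mono) (auto simp: Tset_upd_D)
    also have "\<dots> \<le> c"
      using stable \<open>s j = D\<close> unfolding join_stable_def by blast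
    finally show ?thesis .
  qed
qed

lemma nash_if_join_stable:
  assumes "join_stable f c s" and "\<And>i. s i = A \<Longrightarrow> c \<le> f i (Tset s)"
  shows "nash (stag_payoff f c) s"
  unfolding nash_def
proof (intro allI)
  fix i x
  show "stag_payoff f c i (s(i := x)) \<le> stag_payoff f c i s"
    using assms by (cases x; cases "s i")
      (auto simp: stag_payoff_def join_stable_def Tset_upd_A Tset_upd_D fun_upd_idem)
qed

lemma join_stable_reaches_nash:
  fixes s :: "'i::finite \<Rightarrow> strat"
  assumes mono: "\<And>j T T'. j \<in> T \<Longrightarrow> T \<subseteq> T' \<Longrightarrow> f j T \<le> f j T'"
    and "join_stable f c s"
  shows "\<exists>e. (sdg_arc (stag_payoff f c))\<^sup>*\<^sup>* s e \<and> nash (stag_payoff f c) e"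
  using assms(2)
proof (induction "card (Tset s)" arbitrary: s rule: less_induct)
  case less
  show ?case
  proof (cases "\<exists>i. s i = A \<and> f i (Tset s) < c")
    case False
    then have "nash (stag_payoff f c) s"
      using less.prems by (intro nash_if_join_stable) (auto simp: not_less)
    then show ?thesis by blast
  next
    case True
    then obtain i where i: "s i = A" "f i (Tset s) < c" by blast
    have "Tset (s(i := D)) \<subset> Tset s"
      using i by (auto simp: Tset_def)
    then have "card (Tset (s(i := D))) < card (Tset s)"
      by (simp add: psubset_card_mono)
    then show ?thesis
      using less.hyps join_stable_leave[of f c s i, OF mono less.prems i] sdg_arc_leave[of s i f c, OF i]
      by (meson converse_rtranclp_into_rtranclp)
  qed
qed

theorem theorem4:
  fixes f :: "'i::finite \<Rightarrow> 'i set \<Rightarrow> real" and c :: real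
  assumes "stag_hunt f c"
  shows "weakly_acyclic (stag_payoff f c)"
proof (rule weakly_acyclic_if_reaches_nash)
  fix s :: "'i \<Rightarrow> strat"
  have mono: "f j T \<le> f j T'" if "j \<in> T" "T \<subseteq> T'" for j T T'
    using assms that unfolding stag_hunt_def by (metis order.order_iff_strict)
  obtain s' where "(sdg_arc (stag_payoff f c))\<^sup>*\<^sup>* s s'" "join_stable f c s'"
    using reaches_join_stable by blast
  then show "\<exists>e. (sdg_arc (stag_payoff f c))\<^sup>*\<^sup>* s e \<and> nash (stag_payoff f c) e"
    using join_stable_reaches_nash[of f c, OF mono] by (meson rtranclp_trans)
qed

end
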